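(* Let $w$ be a weight and let $p(\cdot)$ be a measurable exponent on $\mathbb B$ with $p_->1$. Suppose that $P_\alpha$ is well defined on $L^{p(\cdot)}(w)$, in the sense that $P^+_\alpha|f|(z)<\infty$ for every $f\in L^{p(\cdot)}(w)$ and every $z\in\mathbb B$. Then $w^{-1/p(\cdot)}\in L^{p'(\cdot)}(d\mu_\alpha)$, i.e. $\|w^{-1/p(\cdot)}\|_{p'(\cdot)}<\infty$.
   Context: $\mathbb B$ is the unit ball of $\mathbb C^n$, $\langle z,\zeta\rangle=\sum_j z_j\overline{\zeta_j}$, $\alpha>0$, $d\mu_\alpha(z)=(1-|z|^2)^{\alpha-1}d\mu(z)$ with $\mu$ Lebesgue measure. A weight is a non-negative locally integrable function on $\mathbb B$. For a measurable exponent $q:\mathbb B\to[1,\infty)$ (possibly unbounded) and a weight $w$: $\rho_{q(\cdot),w}(f)=\int_{\mathbb B}|f|^{q(z)}w\,d\mu_\alpha$, $L^{q(\cdot)}(w)$ is the set of measurable $f$ with $\rho_{q(\cdot),w}(f/\lambda)<\infty$ for some $\lambda>0$, normed by $\|f\|_{q(\cdot),w}=\inf\{\lambda>0:\rho_{q(\cdot),w}(f/\lambda)\le1\}$; $L^{q(\cdot)}(d\mu_\alpha)$ and $\|\cdot\|_{q(\cdot)}$ are the case $w\equiv1$. $p_-=\operatorname{ess\,inf}_{\mathbb B}p$, and $p'$ is given by $1/p+1/p'=1$. $P^+_\alpha f(z)=\int_{\mathbb B}\frac{f(\zeta)}{|1-\langle z,\zeta\rangle|^{n+\alpha}}d\mu_\alpha(\zeta)$.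 *)

theory Defs
  imports "HOL-Analysis.Analysis"
begin

definition unit_ball :: "(complex ^ 'n) set" where
  "unit_ball = ball 0 1"

definition cinner :: "complex ^ 'n \<Rightarrow> complex ^ 'n \<Rightarrow> complex" where
  "cinner z \<zeta> = (\<Sum>j\<in>UNIV. z $ j * cnj (\<zeta> $ j))"

definition mu_alpha :: "real \<Rightarrow> (complex ^ 'n) measure" where
  "mu_alpha \<alpha> = density lebesgue
     (\<lambda>z. ennreal (indicator unit_ball z * (1 - (norm z)\<^sup>2) powr (\<alpha> - 1)))"

definition is_weight :: "(complex ^ 'n \<Rightarrow> real) \<Rightarrow> bool" where
  "is_weight w \<longleftrightarrow> w \<in> borel_measurable lebesgue \<and> (\<forall>z\<in>unit_ball. 0 \<le> w z) \<and>
     (\<forall>K. compact K \<and> K \<subseteq> unit_ball \<longrightarrow> (\<integral>\<^sup>+ z. ennreal (indicator K z * w z) \<partial>lebesgue) < \<infinity>)"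

definition is_exponent :: "(complex ^ 'n \<Rightarrow> real) \<Rightarrow> bool" where
  "is_exponent q \<longleftrightarrow> q \<in> borel_measurable lebesgue \<and> (\<forall>z\<in>unit_ball. 1 \<le> q z)"

definition ess_inf_ball :: "(complex ^ 'n \<Rightarrow> real) \<Rightarrow> ereal" where
  "ess_inf_ball p = (SUP c\<in>{c::real. AE z in lebesgue. z \<in> unit_ball \<longrightarrow> c \<le> p z}. ereal c)"

definition conj_exp :: "(complex ^ 'n \<Rightarrow> real) \<Rightarrow> complex ^ 'n \<Rightarrow> real" where
  "conj_exp p z = p z / (p z - 1)"

definition modular :: "real \<Rightarrow> (complex ^ 'n \<Rightarrow> real) \<Rightarrow> (complex ^ 'n \<Rightarrow> real)
     \<Rightarrow> (complex ^ 'n \<Rightarrow> complex) \<Rightarrow> ennreal" where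
  "modular \<alpha> q w f = (\<integral>\<^sup>+ z. ennreal ((cmod (f z)) powr (q z) * w z) \<partial>mu_alpha \<alpha>)"

definition in_Lvar :: "real \<Rightarrow> (complex ^ 'n \<Rightarrow> real) \<Rightarrow> (complex ^ 'n \<Rightarrow> real)
     \<Rightarrow> (complex ^ 'n \<Rightarrow> complex) \<Rightarrow> bool" where
  "in_Lvar \<alpha> q w f \<longleftrightarrow> f \<in> borel_measurable lebesgue \<and>
     (\<exists>c>0. modular \<alpha> q w (\<lambda>z. f z / complex_of_real c) < \<infinity>)"

definition P_plus :: "real \<Rightarrow> (complex ^ 'n \<Rightarrow> real) \<Rightarrow> complex ^ 'n \<Rightarrow> ennreal" where
  "P_plus \<alpha> f z = (\<integral>\<^sup>+ \<zeta>. ennreal (f \<zeta> / (cmod (1 - cinner z \<zeta>)) powr (real CARD('n) + \<alpha>))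
      \<partial>mu_alpha \<alpha>)"

end

theory Submission
  imports Defs
begin

text \<open>
  Testing the hypothesis at z = 0, where the Bergman kernel is identically 1, shows that every
  f in L^{p(.)}(w) has \<integral>|f| d\<mu>_\<alpha> < \<infinity>.

  If w vanished on a set Z of positive measure, every function supported on Z would lie in
  L^{p(.)}(w); but Lebesgue measure has no atoms, so Z carries a function that is not integrable.

  For \<sigma> = w^{-1/(p-1)} = (w^{-1/p})^{p'} one has |\<sigma> a|^p w = \<sigma> a^p \<le> \<sigma> a^r for
  0 < a \<le> 1 and 1 < r \<le> p. If \<integral>\<sigma> d\<mu>_\<alpha> = \<infinity>, cut the ball into layers of finite
  \<sigma>-mass m_k and put a = 1/(1 + m_0 + ... + m_k) on the k-th layer: by the Abel-Dini
  theorem \<Sum> a_k m_k diverges while \<Sum> a_k^r m_k converges, so f = \<sigma> a lies in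
  L^{p(.)}(w) without being integrable.
\<close>

text \<open>The right-hand side is the integral of t powr (-(s+1)) over [x, y], whose integrand is
  at least y powr (-(s+1)).\<close>

lemma diff_mult_powr_le_powr_diff:
  fixes x y s :: real
  assumes "0 < x" "x \<le> y" "0 < s"
  shows "(y - x) * y powr (-(s+1)) \<le> (x powr (-s) - y powr (-s)) / s"
proof -
  define u where "u = x / y"
  have y0: "0 < y" using assms by linarith
  have u0: "0 < u" using assms y0 by (simp add: u_def)
  have "1 - s * ln u \<le> exp (- s * ln u)"
    using exp_ge_add_one_self[of "- s * ln u"] by simp
  also have "\<dots> = u powr (-s)" using u0 by (simp add: powr_def)
  finally have "s * (1 - u) \<le> u powr (-s) - 1"
    using ln_le_minus_one[OF u0] mult_left_mono[of "ln u" "u - 1" s] assms(3)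
    by (simp add: algebra_simps)
  then have "y powr (-s) * (1 - u) \<le> y powr (-s) * ((u powr (-s) - 1) / s)"
    using assms(3) by (intro mult_left_mono) (auto simp: field_simps)
  moreover have "(y - x) * y powr (-(s+1)) = y powr (-s) * (1 - u)"
  proof -
    have "y powr (-(s+1)) = y powr (-s) / y"
      using powr_add[of y "-s" "-1"] y0 by (simp add: powr_minus_divide)
    then show ?thesis using y0 by (simp add: u_def field_simps)
  qed
  moreover have "y powr (-s) * u powr (-s) = x powr (-s)"
    using y0 u0 by (simp add: u_def powr_divide powr_minus divide_simps)
  ultimately show ?thesis by (simp add: field_simps)
qed

lemma summable_powr_divide_partial_sums:
  fixes m :: "nat \<Rightarrow> real" and r :: real
  assumes m0: "\<And>k. 0 \<le> m k" and "1 < r"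
  shows "summable (\<lambda>k. m k / (1 + (\<Sum>i\<le>k. m i)) powr r)"
proof (rule summableI_nonneg_bounded)
  define T where "T k = 1 + (\<Sum>i<k. m i)" for k
  define s where "s = r - 1"
  have s0: "0 < s" using \<open>1 < r\<close> by (simp add: s_def)
  have T1: "1 \<le> T k" for k unfolding T_def using m0 by (simp add: sum_nonneg)
  have T_Suc: "T (Suc k) = 1 + (\<Sum>i\<le>k. m i)" for k by (simp add: T_def lessThan_Suc_atMost)
  have telescope: "m k / T (Suc k) powr r \<le> (T k powr (-s) - T (Suc k) powr (-s)) / s" for k
  proof -
    have "m k / T (Suc k) powr r = (T (Suc k) - T k) * T (Suc k) powr (-(s+1))"
      by (simp add: T_def s_def powr_minus divide_inverse)
    also have "\<dots> \<le> (T k powr (-s) - T (Suc k) powr (-s)) / s"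
      using T1[of k] s0 m0[of k] by (intro diff_mult_powr_le_powr_diff) (auto simp: T_def)
    finally show ?thesis .
  qed
  fix n
  have "(\<Sum>k<n. m k / (1 + (\<Sum>i\<le>k. m i)) powr r) \<le> (\<Sum>k<n. (T k powr (-s) - T (Suc k) powr (-s)) / s)"
    unfolding T_Suc[symmetric] by (intro sum_mono telescope)
  also have "\<dots> = (T 0 powr (-s) - T n powr (-s)) / s"
    using sum_lessThan_telescope'[of "\<lambda>k. T k powr (-s)" n]
    by (simp add: sum_divide_distrib[symmetric])
  also have "\<dots> \<le> T 0 powr (-s) / s" using s0 by (simp add: divide_right_mono)
  finally show "(\<Sum>k<n. m k / (1 + (\<Sum>i\<le>k. m i)) powr r) \<le> T 0 powr (-s) / s" .
qed (use m0 in auto)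

lemma not_summable_divide_partial_sums:
  fixes m :: "nat \<Rightarrow> real"
  assumes m0: "\<And>k. 0 \<le> m k" and "\<not> summable m"
  shows "\<not> summable (\<lambda>k. m k / (1 + (\<Sum>i\<le>k. m i)))"
proof
  define T where "T k = 1 + (\<Sum>i<k. m i)" for k
  have T1: "1 \<le> T k" for k unfolding T_def using m0 by (simp add: sum_nonneg)
  have T_mono: "T j \<le> T k" if "j \<le> k" for j k
    unfolding T_def using m0 that by (intro add_left_mono sum_mono2) auto
  have T_Suc: "T (Suc k) = 1 + (\<Sum>i\<le>k. m i)" for k by (simp add: T_def lessThan_Suc_atMost)
  assume "summable (\<lambda>k. m k / (1 + (\<Sum>i\<le>k. m i)))"
  then obtain N where N: "\<And>b. norm (\<Sum>k=N..<b. m k / T (Suc k)) < 1/2"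
    unfolding summable_Cauchy T_Suc[symmetric] by (metis half_gt_zero_iff order_refl zero_less_one)
  have "\<not> (\<forall>M. T M \<le> 2 * T N)"
  proof
    assume "\<forall>M. T M \<le> 2 * T N"
    then have "summable m"
      using m0 by (intro summableI_nonneg_bounded[where x="2 * T N - 1"]) (auto simp: T_def)
    with \<open>\<not> summable m\<close> show False by simp
  qed
  then obtain M where M: "2 * T N < T M" by (auto simp: not_le)
  \<comment> \<open>The block N..<M of the series then contributes at least (T M - T N) / T M > 1/2.\<close>
  have NM: "N \<le> M" using T_mono[of M N] M T1[of N] by (cases "N \<le> M") auto
  have "sum m {..<M} = sum m {..<N} + (\<Sum>k=N..<M. m k)"
    using NM by (simp add: lessThan_atLeast0 sum.atLeastLessThan_concat)
  then have "T M - T N = (\<Sum>k=N..<M. m k)" by (simp add: T_def)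
  also have "\<dots> = T M * (\<Sum>k=N..<M. m k / T M)"
    using T1[of M] by (simp add: sum_divide_distrib[symmetric])
  also have "(\<Sum>k=N..<M. m k / T M) \<le> (\<Sum>k=N..<M. m k / T (Suc k))"
    using T_mono T1 m0
    by (intro sum_mono divide_left_mono) (auto intro!: mult_pos_pos less_le_trans[OF zero_less_one T1])
  also have "\<dots> < 1/2" using N[of M] m0 T1 by (simp add: sum_nonneg)
  finally have "T M - T N < T M / 2" using T1[of M] by (simp add: mult_strict_left_mono)
  with M show False by linarith
qed

lemma dual_weight_powr_le:
  fixes w q r b :: real
  assumes "0 < w" "1 < r" "r \<le> q" "0 < b" "b \<le> 1"
  shows "(w powr (-1 / (q - 1)) * b) powr q * w \<le> w powr (-1 / (q - 1)) * b powr r"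
proof -
  have "(w powr (-1 / (q - 1)) * b) powr q * w = (w powr (-1 / (q - 1) * q) * w) * b powr q"
    using assms by (simp add: powr_mult powr_powr)
  also have "w powr (-1 / (q - 1) * q) * w = w powr (-1 / (q - 1) * q + 1)"
    using assms by (simp only: powr_add powr_one)
  also have "-1 / (q - 1) * q + 1 = -1 / (q - 1)"
    using assms by (simp add: field_simps)
  also have "b powr q \<le> b powr r"
    using assms by (intro powr_mono') auto
  finally show ?thesis by (simp add: mult_left_mono)
qed

lemma nn_integral_mult_comp_nat:
  fixes \<sigma> :: "'a \<Rightarrow> ennreal" and J :: "'a \<Rightarrow> nat" and g :: "nat \<Rightarrow> ennreal"
  assumes [measurable]: "\<sigma> \<in> borel_measurable M" "J \<in> measurable M (count_space UNIV)"
  shows "(\<integral>\<^sup>+z. \<sigma> z * g (J z) \<partial>M)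
    = (\<Sum>k. g k * (\<integral>\<^sup>+z\<in>{z \<in> space M. J z = k}. \<sigma> z \<partial>M))"
proof -
  have disj: "disjoint_family (\<lambda>k. {z \<in> space M. J z = k})"
    by (auto simp: disjoint_family_on_def)
  have "(\<integral>\<^sup>+z. \<sigma> z * g (J z) \<partial>M)
      = (\<integral>\<^sup>+z. (\<Sum>k. g k * (\<sigma> z * indicator {z \<in> space M. J z = k} z)) \<partial>M)"
  proof (rule nn_integral_cong)
    fix z assume "z \<in> space M"
    then show "\<sigma> z * g (J z) = (\<Sum>k. g k * (\<sigma> z * indicator {z \<in> space M. J z = k} z))"
      using suminf_cmult_indicator[OF disj, of z "J z" "\<lambda>k. \<sigma> z * g k"]
      by (simp add: mult_ac)
  qed
  also have "\<dots> = (\<Sum>k. g k * (\<integral>\<^sup>+z\<in>{z \<in> space M. J z = k}. \<sigma> z \<partial>M))"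
    by (simp add: nn_integral_suminf nn_integral_cmult)
  finally show ?thesis .
qed

lemma nn_integral_infinite_obtains_summable_powr_rescaling:
  fixes \<sigma> :: "'a \<Rightarrow> real" and J :: "'a \<Rightarrow> nat" and r :: real
  assumes [measurable]: "\<sigma> \<in> borel_measurable M" "J \<in> measurable M (count_space UNIV)"
    and \<sigma>_nonneg: "\<And>z. 0 \<le> \<sigma> z" and "1 < r"
    and layer_finite: "\<And>k. (\<integral>\<^sup>+z\<in>{z \<in> space M. J z = k}. \<sigma> z \<partial>M) < \<infinity>"
    and infinite: "(\<integral>\<^sup>+z. \<sigma> z \<partial>M) = \<infinity>"
  obtains a :: "nat \<Rightarrow> real"
  where "\<And>k. 0 < a k" "\<And>k. a k \<le> 1"
    and "(\<integral>\<^sup>+z. ennreal (\<sigma> z * a (J z)) \<partial>M) = \<infinity>"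
    and "(\<integral>\<^sup>+z. ennreal (\<sigma> z * a (J z) powr r) \<partial>M) < \<infinity>"
proof -
  define m where "m k = enn2real (\<integral>\<^sup>+z\<in>{z \<in> space M. J z = k}. \<sigma> z \<partial>M)" for k
  have m_nonneg: "0 \<le> m k" for k by (simp add: m_def)
  have layers: "(\<integral>\<^sup>+z. ennreal (\<sigma> z * g (J z)) \<partial>M) = (\<Sum>k. ennreal (g k * m k))"
    if "\<And>k. 0 \<le> g k" for g
    using nn_integral_mult_comp_nat[of "\<lambda>z. ennreal (\<sigma> z)" M J "\<lambda>k. ennreal (g k)"] that
      layer_finite \<sigma>_nonneg
    by (simp add: m_def ennreal_mult less_top)
  define a where "a k = 1 / (1 + (\<Sum>i\<le>k. m i))" for k
  have a_pos: "0 < a k" and a_le_1: "a k \<le> 1" for k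
    using sum_nonneg[of "{..k}" m] m_nonneg by (auto simp: a_def)
  have "\<not> summable m"
  proof
    assume "summable m"
    then have "(\<integral>\<^sup>+z. ennreal (\<sigma> z * 1) \<partial>M) < \<infinity>"
      using layers[of "\<lambda>_. 1"] m_nonneg by (simp add: suminf_ennreal2)
    with infinite show False by simp
  qed
  then have "\<not> summable (\<lambda>k. a k * m k)"
    using not_summable_divide_partial_sums[OF m_nonneg] by (simp add: a_def)
  then have "(\<integral>\<^sup>+z. ennreal (\<sigma> z * a (J z)) \<partial>M) = \<infinity>"
    using layers[of a] a_pos m_nonneg summable_suminf_not_top[of "\<lambda>k. a k * m k"]
    by (fastforce simp: less_imp_le)
  moreover have "summable (\<lambda>k. a k powr r * m k)"
    using summable_powr_divide_partial_sums[OF m_nonneg \<open>1 < r\<close>]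
    by (simp add: a_def powr_divide mult.commute)
  then have "(\<integral>\<^sup>+z. ennreal (\<sigma> z * a (J z) powr r) \<partial>M) < \<infinity>"
    using layers[of "\<lambda>k. a k powr r"] m_nonneg by (simp add: suminf_ennreal2)
  ultimately show ?thesis using that a_pos a_le_1 by blast
qed

lemma measurable_nat_ceiling [measurable]:
  fixes f :: "'a \<Rightarrow> real"
  assumes "f \<in> borel_measurable M"
  shows "(\<lambda>x. nat \<lceil>f x\<rceil>) \<in> measurable M (count_space UNIV)"
proof -
  have "(\<lambda>x::real. nat \<lceil>x\<rceil>) \<in> measurable borel (count_space UNIV)" by measurable
  from measurable_compose[OF assms this] show ?thesis .
qed

lemma obtain_nonneg_infinite_integral_on_disjoint_family:
  fixes A :: "nat \<Rightarrow> 'a set"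
  assumes "disjoint_family A" and [measurable]: "\<And>k. A k \<in> sets M"
    and A_pos: "\<And>k. 0 < measure M (A k)"
  obtains h :: "'a \<Rightarrow> real"
  where "h \<in> borel_measurable M" "\<And>z. 0 \<le> h z" "\<And>z. z \<notin> (\<Union>k. A k) \<Longrightarrow> h z = 0"
    and "(\<integral>\<^sup>+z. h z \<partial>M) = \<infinity>"
proof
  define H where "H z = (\<Sum>k. ennreal (1 / measure M (A k)) * indicator (A k) z)" for z
  have H_single: "H z = ennreal (1 / measure M (A k))" if "z \<in> A k" for z k
    unfolding H_def using suminf_cmult_indicator[OF \<open>disjoint_family A\<close> that] .
  have H_outside: "H z = 0" if "z \<notin> (\<Union>k. A k)" for z
    using that by (simp add: H_def)
  have H_finite: "H z < \<infinity>" for z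
    using H_single H_outside by (cases "z \<in> (\<Union>k. A k)") auto
  show "(\<lambda>z. enn2real (H z)) \<in> borel_measurable M" unfolding H_def by measurable
  show "0 \<le> enn2real (H z)" for z by simp
  show "enn2real (H z) = 0" if "z \<notin> (\<Union>k. A k)" for z using H_outside[OF that] by simp
  have A_finite: "emeasure M (A k) = ennreal (measure M (A k))" for k
    using A_pos[of k] measure_zero_top by (intro emeasure_eq_ennreal_measure) force
  have "(\<integral>\<^sup>+z. enn2real (H z) \<partial>M) = (\<integral>\<^sup>+z. H z \<partial>M)"
    using H_finite by (simp add: less_top)
  also have "\<dots> = (\<Sum>k. ennreal (1 / measure M (A k)) * emeasure M (A k))"
    unfolding H_def by (simp add: nn_integral_suminf nn_integral_cmult_indicator)
  also have "\<dots> = (\<Sum>k. ennreal 1)"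
    using A_pos
    by (intro suminf_cong) (simp add: A_finite ennreal_mult[symmetric] order_less_imp_not_eq2)
  also have "\<dots> = \<infinity>"
    using summable_iff_suminf_neq_top[of "\<lambda>_. 1"] by (simp add: summable_const_iff)
  finally show "(\<integral>\<^sup>+z. enn2real (H z) \<partial>M) = \<infinity>" .
qed

lemma continuous_on_dist_dominated:
  fixes F :: "'a::metric_space \<Rightarrow> 'b::metric_space" and G :: "'a \<Rightarrow> 'c::metric_space"
  assumes "continuous_on A G" and "\<And>x y. x \<in> A \<Longrightarrow> y \<in> A \<Longrightarrow> dist (F x) (F y) \<le> dist (G x) (G y)"
  shows "continuous_on A F"
  unfolding continuous_on_iff
proof (intro ballI allI impI)
  fix x e assume "x \<in> A" "0 < (e::real)"
  then obtain d where "0 < d" "\<forall>y\<in>A. dist y x < d \<longrightarrow> dist (G y) (G x) < e"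
    using assms(1) unfolding continuous_on_iff by blast
  then show "\<exists>d>0. \<forall>y\<in>A. dist y x < d \<longrightarrow> dist (F y) (F x) < e"
    using assms(2) \<open>x \<in> A\<close> by (meson order_le_less_trans)
qed

lemma lmeasurable_Int_cball: "S \<in> sets lebesgue \<Longrightarrow> S \<inter> cball a r \<in> lmeasurable"
  using fmeasurable_Int_fmeasurable[OF lmeasurable_cball[of a r], of S] by (simp add: Int_commute)

lemma continuous_on_measure_Int_cball:
  fixes S :: "'a::euclidean_space set"
  assumes [measurable]: "S \<in> sets lebesgue"
  shows "continuous_on {0..} (\<lambda>t. measure lebesgue (S \<inter> cball 0 t))"
proof (rule continuous_on_dist_dominated)
  define F where "F t = measure lebesgue (S \<inter> cball 0 t)" for t
  define G where "G t = measure lebesgue (cball (0::'a) t)" for t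
  have G_eq: "G t = unit_ball_vol DIM('a) * t ^ DIM('a)" if "0 \<le> t" for t
    using content_cball[OF that, of "0::'a"] by (simp add: G_def)
  have "continuous_on {0..} (\<lambda>t. unit_ball_vol DIM('a) * t ^ DIM('a))"
    by (intro continuous_intros)
  then show "continuous_on {0..} G" by (rule continuous_on_eq) (simp add: G_eq)
  have S_cball: "S \<inter> cball 0 t \<in> lmeasurable" for t
    by (rule lmeasurable_Int_cball) measurable
  have growth: "F t - F s \<le> G t - G s" "F s \<le> F t" "G s \<le> G t" if "0 \<le> s" "s \<le> t" for s t
  proof -
    have "F t \<le> measure lebesgue ((S \<inter> cball 0 s) \<union> (cball 0 t - cball 0 s))"
      unfolding F_def
      by (intro measure_mono_fmeasurable fmeasurable.Un fmeasurable.Diff S_cball) auto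
    also have "\<dots> \<le> F s + measure lebesgue (cball (0::'a) t - cball 0 s)"
      unfolding F_def by (rule measure_Un_le) auto
    also have "measure lebesgue (cball (0::'a) t - cball 0 s) = G t - G s"
      unfolding G_def using that by (intro measure_Diff) (auto simp: subset_cball emeasure_cball)
    finally show "F t - F s \<le> G t - G s" by simp
    show "F s \<le> F t" unfolding F_def using that by (intro measure_mono_fmeasurable S_cball) auto
    show "G s \<le> G t" unfolding G_def using that by (intro measure_mono_fmeasurable) auto
  qed
  fix s t :: real assume "s \<in> {0..}" "t \<in> {0..}"
  then show "dist (F s) (F t) \<le> dist (G s) (G t)"
    using growth[of s t] growth[of t s] by (cases "s \<le> t") (auto simp: dist_real_def)
qed

lemma lebesgue_obtains_halving_radii:
  fixes Z :: "'a::euclidean_space set"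
  assumes [measurable]: "Z \<in> sets lebesgue" and "emeasure lebesgue Z \<noteq> 0"
  obtains t :: "nat \<Rightarrow> real" and m :: real
  where "0 < m" "decseq t" "\<And>k. measure lebesgue (Z \<inter> cball 0 (t k)) = m / 2 ^ k"
proof -
  define F where "F t = measure lebesgue (Z \<inter> cball 0 t)" for t
  have F_mono: "F s \<le> F t" if "s \<le> t" for s t
    unfolding F_def using that by (intro measure_mono_fmeasurable lmeasurable_Int_cball) auto
  have F_0: "F 0 = 0"
    unfolding F_def by (rule negligible_imp_measure0, rule negligible_subset[of "{0}"]) auto
  obtain R where "0 < F R"
  proof (rule ccontr)
    assume "\<not> thesis"
    have "Z \<inter> cball 0 (real n) \<in> null_sets lebesgue" for n
    proof -
      have "\<not> 0 < F (real n)" using that \<open>\<not> thesis\<close> by blast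
      then have "F (real n) = 0" using F_mono[of 0 "real n"] F_0 by simp
      then show ?thesis
        using lmeasurable_Int_cball[of Z 0 "real n"]
        by (simp add: F_def null_sets_def emeasure_eq_measure2)
    qed
    moreover have "Z = (\<Union>n. Z \<inter> cball 0 (real n))"
      by (auto simp: real_arch_simple)
    ultimately have "Z \<in> null_sets lebesgue" by (metis null_sets_UN)
    with assms(2) show False by auto
  qed
  then have "0 \<le> R" using F_mono[of R 0] F_0 by (cases "0 \<le> R") auto
  have "\<exists>t. F t = F R / 2 ^ k" for k
  proof -
    have "continuous_on {0..R} F"
      unfolding F_def by (rule continuous_on_subset[OF continuous_on_measure_Int_cball]) auto
    then show ?thesis
      using IVT'[of F 0 "F R / 2 ^ k" R] F_0 \<open>0 < F R\<close> \<open>0 \<le> R\<close>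
      by (auto simp: divide_le_eq)
  qed
  then obtain t where F_t: "\<And>k. F (t k) = F R / 2 ^ k" by metis
  have "t (Suc k) \<le> t k" for k
  proof (rule ccontr)
    assume "\<not> ?thesis"
    then have "F R / 2 ^ k \<le> F R / 2 ^ Suc k" using F_mono[of "t k" "t (Suc k)"] F_t by simp
    moreover have "F R / 2 ^ Suc k < F R / 2 ^ k"
      using \<open>0 < F R\<close> by (intro divide_strict_left_mono) auto
    ultimately show False by (blast dest: leD)
  qed
  then have "decseq t" by (simp add: decseq_Suc_iff)
  with \<open>0 < F R\<close> F_t show thesis using that[of "F R" t] by (simp add: F_def)
qed

lemma lebesgue_obtains_disjoint_subsets_positive_measure:
  fixes Z :: "'a::euclidean_space set"
  assumes [measurable]: "Z \<in> sets lebesgue" and "emeasure lebesgue Z \<noteq> 0"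
  obtains A :: "nat \<Rightarrow> 'a set"
  where "disjoint_family A" "\<And>k. A k \<subseteq> Z" "\<And>k. A k \<in> sets lebesgue"
    "\<And>k. 0 < measure lebesgue (A k)"
proof -
  obtain t m where "0 < m" "decseq t" and measure_t: "\<And>k. measure lebesgue (Z \<inter> cball 0 (t k)) = m / 2 ^ k"
    using lebesgue_obtains_halving_radii[OF assms] by blast
  define A where "A k = (Z \<inter> cball 0 (t k)) - (Z \<inter> cball 0 (t (Suc k)))" for k
  have "A k \<inter> A j = {}" if "j < k" for j k
  proof -
    have "t k \<le> t (Suc j)" using \<open>decseq t\<close> that by (simp add: decseqD)
    then show ?thesis by (auto simp: A_def)
  qed
  then have "disjoint_family A"
    unfolding disjoint_family_on_def by (metis Int_commute linorder_neqE_nat)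
  moreover have "0 < measure lebesgue (A k)" for k
  proof -
    have "measure lebesgue (A k) = m / 2 ^ k - m / 2 ^ Suc k"
      unfolding A_def measure_t[symmetric]
      using subset_cball[OF decseqD[OF \<open>decseq t\<close>, of k "Suc k"], of 0]
        fmeasurableD2[OF lmeasurable_Int_cball[OF assms(1)]]
      by (intro measure_Diff) auto
    with \<open>0 < m\<close> show ?thesis by simp
  qed
  moreover have "A k \<subseteq> Z" for k by (auto simp: A_def)
  moreover have "A k \<in> sets lebesgue" for k
    using lmeasurable_Int_cball[OF assms(1)] by (auto simp: A_def)
  ultimately show thesis using that by blast
qed

definition mu_alpha_density :: "real \<Rightarrow> complex ^ 'n \<Rightarrow> real" where
  "mu_alpha_density \<alpha> z = indicator unit_ball z * (1 - (norm z)\<^sup>2) powr (\<alpha> - 1)"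

lemma unit_ball_lmeasurable: "(unit_ball :: (complex ^ 'n) set) \<in> lmeasurable"
  by (simp add: unit_ball_def)

lemma sets_lebesgue_unit_ball [measurable]: "unit_ball \<in> sets lebesgue"
  by (simp add: unit_ball_def)

lemma borel_measurable_lebesgue_ident [measurable]: "(\<lambda>x. x) \<in> borel_measurable lebesgue"
  using id_borel_measurable_lebesgue by (simp add: id_def)

lemma borel_measurable_mu_alpha_density [measurable]:
  "mu_alpha_density \<alpha> \<in> borel_measurable lebesgue"
  unfolding mu_alpha_density_def[abs_def] by measurable

lemma mu_alpha_density_nonneg: "0 \<le> mu_alpha_density \<alpha> z"
  by (simp add: mu_alpha_density_def)

lemma mu_alpha_density_pos:
  assumes "z \<in> unit_ball" shows "0 < mu_alpha_density \<alpha> z"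
proof -
  have "(norm z)\<^sup>2 < 1" using assms by (simp add: unit_ball_def abs_square_less_1)
  then show ?thesis using assms by (simp add: mu_alpha_density_def)
qed

lemma mu_alpha_density_outside: "z \<notin> unit_ball \<Longrightarrow> mu_alpha_density \<alpha> z = 0"
  by (simp add: mu_alpha_density_def)

lemma mu_alpha_eq_density: "mu_alpha \<alpha> = density lebesgue (\<lambda>z. ennreal (mu_alpha_density \<alpha> z))"
  by (simp add: mu_alpha_def mu_alpha_density_def)

lemma sets_mu_alpha [measurable_cong, simp]: "sets (mu_alpha \<alpha>) = sets lebesgue"
  by (simp add: mu_alpha_eq_density)

lemma space_mu_alpha [simp]: "space (mu_alpha \<alpha>) = UNIV"
  by (simp add: mu_alpha_eq_density)

lemma nn_integral_mu_alpha:
  "f \<in> borel_measurable lebesgue \<Longrightarrow>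
    (\<integral>\<^sup>+z. f z \<partial>mu_alpha \<alpha>) = (\<integral>\<^sup>+z. ennreal (mu_alpha_density \<alpha> z) * f z \<partial>lebesgue)"
  by (simp add: mu_alpha_eq_density nn_integral_density)

lemma AE_mu_alpha_iff: "(AE z in mu_alpha \<alpha>. P z) \<longleftrightarrow> (AE z in lebesgue. z \<in> unit_ball \<longrightarrow> P z)"
proof -
  have pos_iff: "0 < ennreal (mu_alpha_density \<alpha> z) \<longleftrightarrow> z \<in> unit_ball" for z :: "complex ^ 'n"
    by (cases "z \<in> unit_ball") (simp_all add: mu_alpha_density_pos mu_alpha_density_outside)
  show ?thesis
    unfolding mu_alpha_eq_density by (subst AE_density) (simp_all only: pos_iff, measurable)
qed

lemma P_plus_origin: "P_plus \<alpha> f 0 = (\<integral>\<^sup>+\<zeta>. f \<zeta> \<partial>mu_alpha \<alpha>)"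
  by (simp add: P_plus_def cinner_def)

lemma nn_integral_mu_alpha_finite_if_P_plus_finite:
  fixes f :: "complex ^ 'n \<Rightarrow> complex"
  assumes "\<forall>f. in_Lvar \<alpha> p w f \<longrightarrow> (\<forall>z\<in>unit_ball. P_plus \<alpha> (\<lambda>\<zeta>. cmod (f \<zeta>)) z < \<infinity>)"
    and "in_Lvar \<alpha> p w f"
  shows "(\<integral>\<^sup>+z. cmod (f z) \<partial>mu_alpha \<alpha>) < \<infinity>"
proof -
  have "(0::complex ^ 'n) \<in> unit_ball" by (simp add: unit_ball_def)
  with assms have "P_plus \<alpha> (\<lambda>\<zeta>. cmod (f \<zeta>)) 0 < \<infinity>" by blast
  then show ?thesis by (simp add: P_plus_origin)
qed

lemma weight_pos_AE_if_P_plus_finite: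
  fixes w p :: "complex ^ 'n \<Rightarrow> real"
  assumes [measurable]: "w \<in> borel_measurable lebesgue" and w_nonneg: "\<forall>z\<in>unit_ball. 0 \<le> w z"
    and P_plus_finite: "\<forall>f. in_Lvar \<alpha> p w f \<longrightarrow> (\<forall>z\<in>unit_ball. P_plus \<alpha> (\<lambda>\<zeta>. cmod (f \<zeta>)) z < \<infinity>)"
  shows "AE z in lebesgue. z \<in> unit_ball \<longrightarrow> 0 < w z"
proof (rule ccontr)
  define Z where "Z = {z \<in> unit_ball. \<not> 0 < w z}"
  have Z_sets [measurable]: "Z \<in> sets lebesgue" unfolding Z_def by measurable
  assume "\<not> (AE z in lebesgue. z \<in> unit_ball \<longrightarrow> 0 < w z)"
  then have Z_pos: "emeasure lebesgue Z \<noteq> 0"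
    by (simp add: AE_iff_measurable[OF _ refl] Z_def)
  obtain A :: "nat \<Rightarrow> (complex ^ 'n) set" where A_disj: "disjoint_family A"
    and A_sub: "\<And>k. A k \<subseteq> Z" and A_sets: "\<And>k. A k \<in> sets lebesgue"
    and A_pos: "\<And>k. 0 < measure lebesgue (A k)"
    using lebesgue_obtains_disjoint_subsets_positive_measure[OF Z_sets Z_pos] by blast
  obtain h :: "complex ^ 'n \<Rightarrow> real" where [measurable]: "h \<in> borel_measurable lebesgue"
    and h_nonneg: "\<And>z. 0 \<le> h z" and h_outside: "\<And>z. z \<notin> (\<Union>k. A k) \<Longrightarrow> h z = 0"
    and h_infinite: "(\<integral>\<^sup>+z. h z \<partial>lebesgue) = \<infinity>"
    using obtain_nonneg_infinite_integral_on_disjoint_family[OF A_disj A_sets A_pos] by blast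
  have h_support: "z \<in> Z" if "h z \<noteq> 0" for z
    using h_outside[of z] A_sub that by blast
  define f where "f z = complex_of_real (h z / mu_alpha_density \<alpha> z)" for z
  have [measurable]: "f \<in> borel_measurable lebesgue" unfolding f_def by measurable
  have "(\<integral>\<^sup>+z. cmod (f z) \<partial>mu_alpha \<alpha>) = (\<integral>\<^sup>+z. h z \<partial>lebesgue)"
  proof -
    have "ennreal (mu_alpha_density \<alpha> z) * ennreal (cmod (f z)) = ennreal (h z)" for z
    proof (cases "h z = 0")
      case False
      then have "0 < mu_alpha_density \<alpha> z"
        using h_support by (auto simp: Z_def mu_alpha_density_pos)
      then show ?thesis
        using h_nonneg[of z] by (simp add: f_def ennreal_mult[symmetric] norm_divide)
    qed (simp add: f_def)
    then show ?thesis by (simp add: nn_integral_mu_alpha)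
  qed
  moreover have "in_Lvar \<alpha> p w f"
    unfolding in_Lvar_def
  proof (intro conjI exI[of _ 1])
    have integrand_zero: "cmod (f z) powr p z * w z = 0" for z
      using h_support[of z] w_nonneg by (cases "h z = 0") (auto simp: f_def Z_def)
    then show "modular \<alpha> p w (\<lambda>z. f z / complex_of_real 1) < \<infinity>"
      by (simp add: modular_def integrand_zero)
  qed simp_all
  ultimately show False
    using h_infinite nn_integral_mu_alpha_finite_if_P_plus_finite[OF P_plus_finite, of f] by simp
qed

lemma set_nn_integral_mu_alpha_ceiling_level_finite:
  fixes \<sigma> :: "complex ^ 'n \<Rightarrow> real"
  assumes [measurable]: "\<sigma> \<in> borel_measurable lebesgue" and \<sigma>_nonneg: "\<And>z. 0 \<le> \<sigma> z"
  shows "(\<integral>\<^sup>+z\<in>{z. nat \<lceil>\<sigma> z * mu_alpha_density \<alpha> z\<rceil> = k}. \<sigma> z \<partial>mu_alpha \<alpha>) < \<infinity>"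
proof -
  let ?L = "{z. nat \<lceil>\<sigma> z * mu_alpha_density \<alpha> z\<rceil> = k}"
  have [measurable]: "?L \<in> sets lebesgue"
    using measurable_sets[OF measurable_nat_ceiling,
        of "\<lambda>z. \<sigma> z * mu_alpha_density \<alpha> z" lebesgue "{k}"]
    by (simp add: vimage_def)
  have "(\<integral>\<^sup>+z\<in>?L. \<sigma> z \<partial>mu_alpha \<alpha>)
      = (\<integral>\<^sup>+z. ennreal (mu_alpha_density \<alpha> z) * (ennreal (\<sigma> z) * indicator ?L z) \<partial>lebesgue)"
    by (rule nn_integral_mu_alpha) measurable
  also have "\<dots> \<le> (\<integral>\<^sup>+z. ennreal (real k) * indicator (unit_ball :: (complex ^ 'n) set) z \<partial>lebesgue)"
  proof (rule nn_integral_mono)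
    fix z
    have "\<sigma> z * mu_alpha_density \<alpha> z \<le> real (nat \<lceil>\<sigma> z * mu_alpha_density \<alpha> z\<rceil>)"
      by (rule real_nat_ceiling_ge)
    then show "ennreal (mu_alpha_density \<alpha> z) * (ennreal (\<sigma> z) * indicator ?L z)
        \<le> ennreal (real k) * indicator unit_ball z"
      using \<sigma>_nonneg[of z] mu_alpha_density_nonneg[of \<alpha> z] mu_alpha_density_outside[of z \<alpha>]
      by (cases "z \<in> unit_ball") (auto simp: ennreal_mult[symmetric] mult.commute ennreal_leI
          split: split_indicator)
  qed
  also have "\<dots> = ennreal (real k) * emeasure lebesgue (unit_ball :: (complex ^ 'n) set)"
    by (rule nn_integral_cmult_indicator) measurable
  also have "\<dots> < \<infinity>"
    using fmeasurableD2[OF unit_ball_lmeasurable[where 'n = 'n]]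
    by (simp add: ennreal_mult_less_top less_top)
  finally show ?thesis .
qed

lemma dual_weight_nn_integral_finite:
  fixes w p :: "complex ^ 'n \<Rightarrow> real"
  assumes [measurable]: "w \<in> borel_measurable lebesgue" "p \<in> borel_measurable lebesgue"
    and "1 < r" and AE_ball: "AE z in lebesgue. z \<in> unit_ball \<longrightarrow> 0 < w z \<and> r \<le> p z"
    and P_plus_finite: "\<forall>f. in_Lvar \<alpha> p w f \<longrightarrow> (\<forall>z\<in>unit_ball. P_plus \<alpha> (\<lambda>\<zeta>. cmod (f \<zeta>)) z < \<infinity>)"
  shows "(\<integral>\<^sup>+z. w z powr (-1 / (p z - 1)) \<partial>mu_alpha \<alpha>) < \<infinity>"
proof (rule ccontr)
  define \<sigma> where "\<sigma> z = w z powr (-1 / (p z - 1))" for z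
  define J where "J z = nat \<lceil>\<sigma> z * mu_alpha_density \<alpha> z\<rceil>" for z
  have [measurable]: "\<sigma> \<in> borel_measurable lebesgue" unfolding \<sigma>_def by measurable
  have [measurable]: "J \<in> measurable (mu_alpha \<alpha>) (count_space UNIV)" unfolding J_def by measurable
  assume "\<not> (\<integral>\<^sup>+z. w z powr (-1 / (p z - 1)) \<partial>mu_alpha \<alpha>) < \<infinity>"
  then have "(\<integral>\<^sup>+z. \<sigma> z \<partial>mu_alpha \<alpha>) = \<infinity>" by (simp add: \<sigma>_def less_top[symmetric])
  moreover have "(\<integral>\<^sup>+z\<in>{z \<in> space (mu_alpha \<alpha>). J z = k}. \<sigma> z \<partial>mu_alpha \<alpha>) < \<infinity>" for k
    using set_nn_integral_mu_alpha_ceiling_level_finite[of \<sigma>] by (simp add: J_def \<sigma>_def)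
  ultimately obtain a :: "nat \<Rightarrow> real" where a_pos: "\<And>k. 0 < a k" and a_le_1: "\<And>k. a k \<le> 1"
    and not_integrable: "(\<integral>\<^sup>+z. ennreal (\<sigma> z * a (J z)) \<partial>mu_alpha \<alpha>) = \<infinity>"
    and powr_integrable: "(\<integral>\<^sup>+z. ennreal (\<sigma> z * a (J z) powr r) \<partial>mu_alpha \<alpha>) < \<infinity>"
    using nn_integral_infinite_obtains_summable_powr_rescaling[of \<sigma> "mu_alpha \<alpha>" J r] \<open>1 < r\<close>
    by (auto simp: \<sigma>_def)
  define f where "f z = complex_of_real (\<sigma> z * a (J z))" for z
  have norm_f: "cmod (f z) = \<sigma> z * a (J z)" for z
    using a_pos[of "J z"] by (simp add: f_def \<sigma>_def norm_mult)
  have "in_Lvar \<alpha> p w f"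
    unfolding in_Lvar_def
  proof (intro conjI exI[of _ 1])
    show "f \<in> borel_measurable lebesgue" unfolding f_def J_def by measurable
    have "modular \<alpha> p w (\<lambda>z. f z / complex_of_real 1)
        \<le> (\<integral>\<^sup>+z. ennreal (\<sigma> z * a (J z) powr r) \<partial>mu_alpha \<alpha>)"
      unfolding modular_def
    proof (rule nn_integral_mono_AE)
      show "AE z in mu_alpha \<alpha>. ennreal (cmod (f z / complex_of_real 1) powr p z * w z)
          \<le> ennreal (\<sigma> z * a (J z) powr r)"
        unfolding AE_mu_alpha_iff using AE_ball
      proof eventually_elim
        case (elim z)
        have "(\<sigma> z * a (J z)) powr p z * w z \<le> \<sigma> z * a (J z) powr r" if "z \<in> unit_ball"
          unfolding \<sigma>_def using elim that \<open>1 < r\<close> a_pos a_le_1 by (intro dual_weight_powr_le) auto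
        then show ?case by (auto intro: ennreal_leI simp: norm_f)
      qed
    qed
    with powr_integrable show "modular \<alpha> p w (\<lambda>z. f z / complex_of_real 1) < \<infinity>" by simp
  qed simp
  then show False
    using nn_integral_mu_alpha_finite_if_P_plus_finite[OF P_plus_finite, of f] not_integrable
    by (simp add: norm_f)
qed

theorem propositionl1:
  fixes w p :: "complex ^ 'n \<Rightarrow> real" and \<alpha> :: real
  assumes "0 < \<alpha>"
    and "is_weight w"
    and "is_exponent p"
    and "ess_inf_ball p > 1"
    and "\<forall>f. in_Lvar \<alpha> p w f \<longrightarrow> (\<forall>z\<in>unit_ball. P_plus \<alpha> (\<lambda>\<zeta>. cmod (f \<zeta>)) z < \<infinity>)"
  shows "(AE z in lebesgue. z \<in> unit_ball \<longrightarrow> 0 < w z) \<and>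
         in_Lvar \<alpha> (conj_exp p) (\<lambda>_. 1) (\<lambda>z. complex_of_real (w z powr (- 1 / p z)))"
proof
  have [measurable]: "w \<in> borel_measurable lebesgue" "p \<in> borel_measurable lebesgue"
    and w_nonneg: "\<forall>z\<in>unit_ball. 0 \<le> w z"
    using assms(2,3) by (auto simp: is_weight_def is_exponent_def)
  show w_pos: "AE z in lebesgue. z \<in> unit_ball \<longrightarrow> 0 < w z"
    by (rule weight_pos_AE_if_P_plus_finite[OF _ w_nonneg assms(5)]) measurable
  obtain r where "1 < r" and "AE z in lebesgue. z \<in> unit_ball \<longrightarrow> r \<le> p z"
    using assms(4) unfolding ess_inf_ball_def less_SUP_iff by auto
  with w_pos have AE_ball: "AE z in lebesgue. z \<in> unit_ball \<longrightarrow> 0 < w z \<and> r \<le> p z"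
    by eventually_elim blast
  have "modular \<alpha> (conj_exp p) (\<lambda>_. 1)
        (\<lambda>z. complex_of_real (w z powr (- 1 / p z)) / complex_of_real 1)
      = (\<integral>\<^sup>+z. w z powr (-1 / (p z - 1)) \<partial>mu_alpha \<alpha>)"
    unfolding modular_def using AE_ball \<open>1 < r\<close>
    by (intro nn_integral_cong_AE) (auto simp: AE_mu_alpha_iff conj_exp_def powr_powr elim!: AE_mp)
  also have "\<dots> < \<infinity>"
    by (rule dual_weight_nn_integral_finite[OF _ _ \<open>1 < r\<close> AE_ball assms(5)]) measurable
  finally show "in_Lvar \<alpha> (conj_exp p) (\<lambda>_. 1) (\<lambda>z. complex_of_real (w z powr (- 1 / p z)))"
    unfolding in_Lvar_def by (intro conjI exI[of _ 1]) simp_all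
qed

end
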